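(* Let $X$ be a finite set, $O$ a finite set, $\mathcal{U}=\{C_1,\dots,C_n\}$ a family of subsets of $X$ with $\bigcup\mathcal{U}=X$, and $e$ an empirical model on $\mathcal{U}$. If $e$ is possibilistically extendable, then $\gamma(s)=0$ for every $k$ and every $s\in S_e(C_k)$. If $e$ is not strongly contextual, then $\gamma(s)=0$ for some $k$ and some $s\in S_e(C_k)$.
   Context: $X$ is discrete; $\mathcal{E}(U)=O^U$ with restriction of functions. An empirical model is a family $\{e_C\}_{C\in\mathcal{U}}$, $e_C$ a probability distribution on $O^C$, with the marginals of $e_C$ and $e_{C'}$ on $C\cap C'$ agreeing for all $C,C'$. For $U$ contained in some $C\in\mathcal{U}$, $e_U$ is the marginal of $e_C$ on $U$ and $S_e(U)=\{s\in O^U:e_U(s)>0\}$. The model is possibilistically extendable if for every $k$ and every $s\in S_e(C_k)$ there is a family $\{s_i\in S_e(C_i)\}_{i=1}^n$ with $s_k=s$ and $s_i|(C_i\cap C_j)=s_j|(C_i\cap C_j)$ for all $i,j$; it is strongly contextual if for every $k$ and every $s\in S_e(C_k)$ no such family exists. $\mathcal{F}=F_{\mathbb{Z}}S_e$: $\mathcal{F}(U)$ is the free abelian group on $S_e(U)$ with restriction $\sum a_ss\mapsto\sum a_s(s|V)$. Čech cochains relative to the nerve (lists $\sigma=(V_0,\dots,V_q)$ of members of $\mathcal{U}$ with $|\sigma|=\bigcap V_l\neq\varnothing$): $C^q(\mathcal{U},\mathcal{G})=\prod_\sigma\mathcal{G}(|\sigma|)$, $\delta^q(\omega)(\sigma)=\sum_{j=0}^{q+1}(-1)^j\omega(\partial_j\sigma)|_{|\sigma|}$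 ($\partial_j$ omits the $j$-th entry), $H^q=\ker\delta^q/\operatorname{im}\delta^{q-1}$. For $U\subseteq X$, $\mathcal{F}_{\bar U}(V)=\{r\in\mathcal{F}(V):r|(U\cap V)=0\}$. Obstruction of $s\in S_e(C_k)$: choose $s_k=s$ and $s_i\in S_e(C_i)$ with $s_i|(C_k\cap C_i)=s|(C_k\cap C_i)$ (possible by compatibility), let $c=(s_1,\dots,s_n)\in C^0(\mathcal{U},\mathcal{F})$, $z=\delta^0(c)$, which is a $1$-cocycle of $C^\bullet(\mathcal{U},\mathcal{F}_{\bar C_k})$; $\gamma(s):=[z]\in H^1(\mathcal{U},\mathcal{F}_{\bar C_k})$. *)

theory Defs
  imports "HOL-Probability.Probability_Mass_Function" "HOL-Library.Function_Algebras"
begin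

(* Sections over U: elements of Out^U, represented as partial maps with domain exactly U. *)
definition sections :: "'o set \<Rightarrow> 'x set \<Rightarrow> ('x \<rightharpoonup> 'o) set" where
  "sections Out U = {s. dom s = U \<and> ran s \<subseteq> Out}"

(* Cover U = {C 0, ..., C (n-1)}; e k is a probability distribution on Out^(C k);
   marginals on pairwise intersections agree. *)
definition empirical_model ::
  "'o set \<Rightarrow> (nat \<Rightarrow> 'x set) \<Rightarrow> nat \<Rightarrow> (nat \<Rightarrow> ('x \<rightharpoonup> 'o) pmf) \<Rightarrow> bool" where
  "empirical_model Out C n e \<longleftrightarrow>
     (\<forall>k<n. set_pmf (e k) \<subseteq> sections Out (C k)) \<and>
     (\<forall>k<n. \<forall>k'<n. map_pmf (\<lambda>s. s |` (C k \<inter> C k')) (e k)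
                    = map_pmf (\<lambda>s. s |` (C k \<inter> C k')) (e k'))"

(* S_e(U): support of the marginal e_U (of e_C for any C containing U). *)
definition supp_e ::
  "(nat \<Rightarrow> 'x set) \<Rightarrow> nat \<Rightarrow> (nat \<Rightarrow> ('x \<rightharpoonup> 'o) pmf) \<Rightarrow> 'x set \<Rightarrow> ('x \<rightharpoonup> 'o) set" where
  "supp_e C n e U = {t. \<exists>k<n. U \<subseteq> C k \<and> pmf (map_pmf (\<lambda>s. s |` U) (e k)) t > 0}"

definition poss_extendable ::
  "(nat \<Rightarrow> 'x set) \<Rightarrow> nat \<Rightarrow> (nat \<Rightarrow> ('x \<rightharpoonup> 'o) pmf) \<Rightarrow> bool" where
  "poss_extendable C n e \<longleftrightarrow>
     (\<forall>k<n. \<forall>s\<in>supp_e C n e (C k). \<exists>f. f k = s \<and> (\<forall>i<n. f i \<in> supp_e C n e (C i)) \<and>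
        (\<forall>i<n. \<forall>j<n. f i |` (C i \<inter> C j) = f j |` (C i \<inter> C j)))"

definition strongly_contextual ::
  "(nat \<Rightarrow> 'x set) \<Rightarrow> nat \<Rightarrow> (nat \<Rightarrow> ('x \<rightharpoonup> 'o) pmf) \<Rightarrow> bool" where
  "strongly_contextual C n e \<longleftrightarrow>
     (\<forall>k<n. \<forall>s\<in>supp_e C n e (C k). \<not> (\<exists>f. f k = s \<and> (\<forall>i<n. f i \<in> supp_e C n e (C i)) \<and>
        (\<forall>i<n. \<forall>j<n. f i |` (C i \<inter> C j) = f j |` (C i \<inter> C j))))"

(* F(U) = free abelian group on S_e(U): integer-valued functions supported in S_e(U). *)
type_synonym ('x, 'o) chain = "('x \<rightharpoonup> 'o) \<Rightarrow> int"

definition Fgrp ::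
  "(nat \<Rightarrow> 'x set) \<Rightarrow> nat \<Rightarrow> (nat \<Rightarrow> ('x \<rightharpoonup> 'o) pmf) \<Rightarrow> 'x set \<Rightarrow> ('x, 'o) chain set" where
  "Fgrp C n e U = {a. \<forall>t. a t \<noteq> 0 \<longrightarrow> t \<in> supp_e C n e U}"

definition resF ::
  "(nat \<Rightarrow> 'x set) \<Rightarrow> nat \<Rightarrow> (nat \<Rightarrow> ('x \<rightharpoonup> 'o) pmf) \<Rightarrow> 'x set \<Rightarrow> 'x set
     \<Rightarrow> ('x, 'o) chain \<Rightarrow> ('x, 'o) chain" where
  "resF C n e U V a = (\<lambda>t. \<Sum>s\<in>{s \<in> supp_e C n e U. s |` V = t}. a s)"

definition gen :: "('x \<rightharpoonup> 'o) \<Rightarrow> ('x, 'o) chain" where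
  "gen s = (\<lambda>t. if t = s then 1 else 0)"

definition Fbar ::
  "(nat \<Rightarrow> 'x set) \<Rightarrow> nat \<Rightarrow> (nat \<Rightarrow> ('x \<rightharpoonup> 'o) pmf) \<Rightarrow> 'x set \<Rightarrow> 'x set \<Rightarrow> ('x, 'o) chain set" where
  "Fbar C n e W V = {r \<in> Fgrp C n e V. resF C n e V (W \<inter> V) r = 0}"

definition inter_of :: "(nat \<Rightarrow> 'x set) \<Rightarrow> nat list \<Rightarrow> 'x set" where
  "inter_of C \<sigma> = \<Inter> (C ` set \<sigma>)"

definition nerve :: "(nat \<Rightarrow> 'x set) \<Rightarrow> nat \<Rightarrow> nat \<Rightarrow> nat list set" where
  "nerve C n q = {\<sigma>. length \<sigma> = Suc q \<and> set \<sigma> \<subseteq> {..<n} \<and> inter_of C \<sigma> \<noteq> {}}"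

(* C^q(U, G) = prod_{sigma} G(|sigma|), cochains set to 0 off the nerve *)
definition cochains ::
  "(nat \<Rightarrow> 'x set) \<Rightarrow> nat \<Rightarrow> ('x set \<Rightarrow> ('x, 'o) chain set) \<Rightarrow> nat
     \<Rightarrow> (nat list \<Rightarrow> ('x, 'o) chain) set" where
  "cochains C n G q = {\<omega>. (\<forall>\<sigma>\<in>nerve C n q. \<omega> \<sigma> \<in> G (inter_of C \<sigma>)) \<and>
                          (\<forall>\<sigma>. \<sigma> \<notin> nerve C n q \<longrightarrow> \<omega> \<sigma> = 0)}"

definition face :: "nat \<Rightarrow> nat list \<Rightarrow> nat list" where
  "face j \<sigma> = take j \<sigma> @ drop (Suc j) \<sigma>"

definition coboundary ::
  "(nat \<Rightarrow> 'x set) \<Rightarrow> nat \<Rightarrow> (nat \<Rightarrow> ('x \<rightharpoonup> 'o) pmf) \<Rightarrow> nat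
     \<Rightarrow> (nat list \<Rightarrow> ('x, 'o) chain) \<Rightarrow> (nat list \<Rightarrow> ('x, 'o) chain)" where
  "coboundary C n e q \<omega> = (\<lambda>\<sigma>. if \<sigma> \<in> nerve C n (Suc q) then
      (\<lambda>t. \<Sum>j\<le>Suc q. (-1::int)^j *
          resF C n e (inter_of C (face j \<sigma>)) (inter_of C \<sigma>) (\<omega> (face j \<sigma>)) t)
    else 0)"

definition coboundaries ::
  "(nat \<Rightarrow> 'x set) \<Rightarrow> nat \<Rightarrow> (nat \<Rightarrow> ('x \<rightharpoonup> 'o) pmf) \<Rightarrow> ('x set \<Rightarrow> ('x, 'o) chain set)
     \<Rightarrow> nat \<Rightarrow> (nat list \<Rightarrow> ('x, 'o) chain) set" where
  "coboundaries C n e G q =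
     (if q = 0 then {0} else coboundary C n e (q - 1) ` cochains C n G (q - 1))"

(* class [z] in H^q = ker delta^q / im delta^(q-1), as a coset of the coboundaries *)
definition cohom_class ::
  "(nat \<Rightarrow> 'x set) \<Rightarrow> nat \<Rightarrow> (nat \<Rightarrow> ('x \<rightharpoonup> 'o) pmf) \<Rightarrow> ('x set \<Rightarrow> ('x, 'o) chain set)
     \<Rightarrow> nat \<Rightarrow> (nat list \<Rightarrow> ('x, 'o) chain) \<Rightarrow> (nat list \<Rightarrow> ('x, 'o) chain) set" where
  "cohom_class C n e G q z = (\<lambda>b. z + b) ` coboundaries C n e G q"

definition cohom_zero ::
  "(nat \<Rightarrow> 'x set) \<Rightarrow> nat \<Rightarrow> (nat \<Rightarrow> ('x \<rightharpoonup> 'o) pmf) \<Rightarrow> ('x set \<Rightarrow> ('x, 'o) chain set)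
     \<Rightarrow> nat \<Rightarrow> (nat list \<Rightarrow> ('x, 'o) chain) set" where
  "cohom_zero C n e G q = cohom_class C n e G q 0"

definition valid_choice ::
  "(nat \<Rightarrow> 'x set) \<Rightarrow> nat \<Rightarrow> (nat \<Rightarrow> ('x \<rightharpoonup> 'o) pmf) \<Rightarrow> nat \<Rightarrow> ('x \<rightharpoonup> 'o)
     \<Rightarrow> (nat \<Rightarrow> ('x \<rightharpoonup> 'o)) \<Rightarrow> bool" where
  "valid_choice C n e k s f \<longleftrightarrow> f k = s \<and>
     (\<forall>i<n. f i \<in> supp_e C n e (C i) \<and> f i |` (C k \<inter> C i) = s |` (C k \<inter> C i))"

definition zero_cochain_of ::
  "(nat \<Rightarrow> 'x set) \<Rightarrow> nat \<Rightarrow> (nat \<Rightarrow> ('x \<rightharpoonup> 'o)) \<Rightarrow> (nat list \<Rightarrow> ('x, 'o) chain)" where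
  "zero_cochain_of C n f = (\<lambda>\<sigma>. if \<sigma> \<in> nerve C n 0 then gen (f (hd \<sigma>)) else 0)"

definition gamma ::
  "(nat \<Rightarrow> 'x set) \<Rightarrow> nat \<Rightarrow> (nat \<Rightarrow> ('x \<rightharpoonup> 'o) pmf) \<Rightarrow> nat \<Rightarrow> ('x \<rightharpoonup> 'o)
     \<Rightarrow> (nat list \<Rightarrow> ('x, 'o) chain) set" where
  "gamma C n e k s = (let f = (SOME f. valid_choice C n e k s f) in
     cohom_class C n e (Fbar C n e (C k)) 1 (coboundary C n e 0 (zero_cochain_of C n f)))"

end

theory Submission
  imports Defs
begin

text \<open>If s extends to a compatible family g, then the 0-cochain of g is a cocycle, since
  the sections of g agree on overlaps. The admissible choice f used to define gamma(s)
  agrees with g on every intersection with C k (both restrict to s there), so the difference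
  of the two 0-cochains is a 0-cochain with values in Fbar (C k), and the coboundary of the
  cochain of f equals the coboundary of that difference. A model that is not strongly
  contextual has at least one such s.\<close>

lemma finite_supp_e:
  assumes "empirical_model Out C n e" and "finite Out" and "\<And>k. k < n \<Longrightarrow> finite (C k)"
  shows "finite (supp_e C n e U)"
proof -
  have "supp_e C n e U \<subseteq> (\<Union>k<n. (\<lambda>s. s |` U) ` sections Out (C k))"
  proof
    fix t assume "t \<in> supp_e C n e U"
    then obtain k where k: "k < n" "pmf (map_pmf (\<lambda>s. s |` U) (e k)) t > 0"
      unfolding supp_e_def by auto
    hence "t \<in> (\<lambda>s. s |` U) ` set_pmf (e k)"
      by (metis set_map_pmf set_pmf_iff less_irrefl)
    moreover have "set_pmf (e k) \<subseteq> sections Out (C k)"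
      using assms(1) k(1) unfolding empirical_model_def by auto
    ultimately show "t \<in> (\<Union>k<n. (\<lambda>s. s |` U) ` sections Out (C k))" using k(1) by blast
  qed
  moreover have "finite (sections Out (C k))" if "k < n" for k
    unfolding sections_def using finite_set_of_finite_maps assms(2,3) that by blast
  hence "finite (\<Union>k<n. (\<lambda>s. s |` U) ` sections Out (C k))" by auto
  ultimately show ?thesis using finite_subset by blast
qed

lemma resF_add: "resF C n e U V (a + b) = resF C n e U V a + resF C n e U V b"
  unfolding resF_def by (auto simp: sum.distrib)

lemma resF_diff: "resF C n e U V (a - b) = resF C n e U V a - resF C n e U V b"
  unfolding resF_def by (auto simp: sum_subtractf)

lemma resF_gen:
  assumes "finite (supp_e C n e U)" and "s \<in> supp_e C n e U"
  shows "resF C n e U V (gen s) = gen (s |` V)"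
proof
  fix t
  have "resF C n e U V (gen s) t
      = (\<Sum>s'\<in>{s' \<in> supp_e C n e U. s' |` V = t}. if s' = s then 1 else 0)"
    unfolding resF_def gen_def by (intro sum.cong) auto
  also have "\<dots> = gen (s |` V) t"
    using assms by (simp add: gen_def)
  finally show "resF C n e U V (gen s) t = gen (s |` V) t" .
qed

lemma coboundary_add:
  "coboundary C n e q (a + b) = coboundary C n e q a + coboundary C n e q b"
  unfolding coboundary_def by (auto simp: resF_add sum.distrib distrib_left fun_eq_iff)

lemma coboundary_diff:
  "coboundary C n e q (a - b) = coboundary C n e q a - coboundary C n e q b"
  unfolding coboundary_def by (auto simp: resF_diff sum_subtractf right_diff_distrib fun_eq_iff)

lemma Fbar_add: "a \<in> Fbar C n e W V \<Longrightarrow> b \<in> Fbar C n e W V \<Longrightarrow> a + b \<in> Fbar C n e W V"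
  unfolding Fbar_def Fgrp_def by (auto simp: resF_add) (metis add.right_neutral)

lemma Fbar_diff: "a \<in> Fbar C n e W V \<Longrightarrow> b \<in> Fbar C n e W V \<Longrightarrow> a - b \<in> Fbar C n e W V"
  unfolding Fbar_def Fgrp_def by (auto simp: resF_diff) (metis)

lemma cochains_Fbar_add:
  "a \<in> cochains C n (Fbar C n e W) q \<Longrightarrow> b \<in> cochains C n (Fbar C n e W) q
   \<Longrightarrow> a + b \<in> cochains C n (Fbar C n e W) q"
  unfolding cochains_def by (auto intro: Fbar_add)

lemma cochains_Fbar_diff:
  "a \<in> cochains C n (Fbar C n e W) q \<Longrightarrow> b \<in> cochains C n (Fbar C n e W) q
   \<Longrightarrow> a - b \<in> cochains C n (Fbar C n e W) q"
  unfolding cochains_def by (auto intro: Fbar_diff)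

lemma cohom_class_coboundary_eq_zero:
  assumes "d \<in> cochains C n (Fbar C n e W) q"
  shows "cohom_class C n e (Fbar C n e W) (Suc q) (coboundary C n e q d)
       = cohom_zero C n e (Fbar C n e W) (Suc q)"
proof -
  let ?B = "coboundary C n e q ` cochains C n (Fbar C n e W) q"
  have "(\<lambda>b. coboundary C n e q d + b) ` ?B = ?B"
  proof (intro equalityI subsetI)
    fix y assume "y \<in> (\<lambda>b. coboundary C n e q d + b) ` ?B"
    then obtain x where "x \<in> cochains C n (Fbar C n e W) q"
      and "y = coboundary C n e q (d + x)"
      by (auto simp: coboundary_add)
    with assms show "y \<in> ?B" by (blast intro: cochains_Fbar_add)
  next
    fix y assume "y \<in> ?B"
    then obtain x where "x \<in> cochains C n (Fbar C n e W) q"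
      and "y = coboundary C n e q d + coboundary C n e q (x - d)"
      by (auto simp: coboundary_diff)
    with assms show "y \<in> (\<lambda>b. coboundary C n e q d + b) ` ?B"
      by (blast intro: cochains_Fbar_diff)
  qed
  thus ?thesis unfolding cohom_zero_def cohom_class_def coboundaries_def by simp
qed

lemma inter_of_singleton [simp]: "inter_of C [i] = C i"
  unfolding inter_of_def by simp

lemma inter_of_pair [simp]: "inter_of C [i, j] = C i \<inter> C j"
  unfolding inter_of_def by auto

lemma coboundary_zero_cochain_of_compatible:
  assumes fin: "\<And>U. finite (supp_e C n e U)"
    and sections: "\<forall>i<n. g i \<in> supp_e C n e (C i)"
    and compatible: "\<forall>i<n. \<forall>j<n. g i |` (C i \<inter> C j) = g j |` (C i \<inter> C j)"
  shows "coboundary C n e 0 (zero_cochain_of C n g) = 0"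
proof
  fix \<sigma>
  show "coboundary C n e 0 (zero_cochain_of C n g) \<sigma> = 0 \<sigma>"
  proof (cases "\<sigma> \<in> nerve C n 1")
    case False
    thus ?thesis unfolding coboundary_def by simp
  next
    case True
    then obtain i j where ij: "\<sigma> = [i, j]" "i < n" "j < n" "C i \<inter> C j \<noteq> {}"
      unfolding nerve_def by (force simp: length_Suc_conv)
    have "[i] \<in> nerve C n 0" "[j] \<in> nerve C n 0"
      using ij unfolding nerve_def by auto
    moreover have "face 0 [i, j] = [j]" "face 1 [i, j] = [i]"
      unfolding face_def by auto
    ultimately have "coboundary C n e 0 (zero_cochain_of C n g) \<sigma>
        = gen (g j |` (C i \<inter> C j)) - gen (g i |` (C i \<inter> C j))"
      using True ij sections fin
      by (simp add: coboundary_def zero_cochain_of_def resF_gen Int_commute fun_eq_iff)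
    moreover have "g j |` (C i \<inter> C j) = g i |` (C i \<inter> C j)"
      using compatible ij(2,3) by metis
    ultimately show ?thesis by simp
  qed
qed

lemma zero_cochain_of_diff_in_cochains_Fbar:
  assumes fin: "\<And>U. finite (supp_e C n e U)"
    and "valid_choice C n e k s f" and "valid_choice C n e k s g"
  shows "zero_cochain_of C n f - zero_cochain_of C n g \<in> cochains C n (Fbar C n e (C k)) 0"
  unfolding cochains_def mem_Collect_eq
proof (intro conjI ballI allI impI)
  fix \<sigma> assume "\<sigma> \<notin> nerve C n 0"
  thus "(zero_cochain_of C n f - zero_cochain_of C n g) \<sigma> = 0"
    unfolding zero_cochain_of_def by simp
next
  fix \<sigma> assume \<sigma>: "\<sigma> \<in> nerve C n 0"
  then obtain i where i: "\<sigma> = [i]" "i < n"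
    unfolding nerve_def by (auto simp: length_Suc_conv)
  have "f i \<in> supp_e C n e (C i)" "f i |` (C k \<inter> C i) = s |` (C k \<inter> C i)"
    and "g i \<in> supp_e C n e (C i)" "g i |` (C k \<inter> C i) = s |` (C k \<inter> C i)"
    using assms(2,3) i(2) unfolding valid_choice_def by auto
  moreover have "(zero_cochain_of C n f - zero_cochain_of C n g) \<sigma> = gen (f i) - gen (g i)"
    using \<sigma> i(1) unfolding zero_cochain_of_def by simp
  ultimately show "(zero_cochain_of C n f - zero_cochain_of C n g) \<sigma>
      \<in> Fbar C n e (C k) (inter_of C \<sigma>)"
    using fin i(1) by (simp add: Fbar_def Fgrp_def resF_diff resF_gen) (auto simp: gen_def)
qed

lemma gamma_eq_zero_if_compatible_family:
  assumes fin: "\<And>U. finite (supp_e C n e U)" and "k < n"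
    and "g k = s" and sections: "\<forall>i<n. g i \<in> supp_e C n e (C i)"
    and compatible: "\<forall>i<n. \<forall>j<n. g i |` (C i \<inter> C j) = g j |` (C i \<inter> C j)"
  shows "gamma C n e k s = cohom_zero C n e (Fbar C n e (C k)) 1"
proof -
  have g: "valid_choice C n e k s g"
    unfolding valid_choice_def using assms(2-5) by metis
  define f where "f = (SOME f. valid_choice C n e k s f)"
  have f: "valid_choice C n e k s f"
    unfolding f_def by (rule someI[where P = "valid_choice C n e k s", OF g])
  have "coboundary C n e 0 (zero_cochain_of C n f)
      = coboundary C n e 0 (zero_cochain_of C n f - zero_cochain_of C n g)"
    using coboundary_zero_cochain_of_compatible[OF fin sections compatible]
    by (simp add: coboundary_diff)
  thus ?thesis
    unfolding gamma_def Let_def f_def[symmetric] One_nat_def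
    using cohom_class_coboundary_eq_zero zero_cochain_of_diff_in_cochains_Fbar[OF fin f g]
    by metis
qed

theorem proposition6:
  fixes X :: "'x set" and Out :: "'o set" and C :: "nat \<Rightarrow> 'x set" and n :: nat
    and e :: "nat \<Rightarrow> ('x \<rightharpoonup> 'o) pmf"
  assumes "finite X" and "finite Out"
    and "(\<Union>i<n. C i) = X"
    and "empirical_model Out C n e"
  shows "(poss_extendable C n e \<longrightarrow>
            (\<forall>k<n. \<forall>s\<in>supp_e C n e (C k).
               gamma C n e k s = cohom_zero C n e (Fbar C n e (C k)) 1))
       \<and> (\<not> strongly_contextual C n e \<longrightarrow>
            (\<exists>k<n. \<exists>s\<in>supp_e C n e (C k).
               gamma C n e k s = cohom_zero C n e (Fbar C n e (C k)) 1))"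
proof -
  have "finite (C k)" if "k < n" for k
    using assms(1,3) that by (meson UN_I finite_subset lessThan_iff subsetI)
  hence fin: "\<And>U. finite (supp_e C n e U)"
    using finite_supp_e[OF assms(4,2)] by blast
  note gamma_zero = gamma_eq_zero_if_compatible_family[OF fin]
  show ?thesis
    unfolding poss_extendable_def strongly_contextual_def using gamma_zero by blast
qed

end
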